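(* Let $n,k\ge 1$ be integers, let $\mathcal{D}$ be a set, and let $h_1,\dots,h_k:\mathcal{D}\to\{0,1\}$ be indicator functions such that $\sum_{j=1}^k h_j(d)=1$ for all $d\in\mathcal{D}$ (so each data point belongs to exactly one class). Let $\alpha\in(0,\frac1k]$ and let $X=(D_1,\dots,D_n)$ be a random database whose entries $D_1,\dots,D_n$ are independent (not necessarily identically distributed) and satisfy $P_{D_i}(\{d\in\mathcal{D}: h_j(d)=1\})\ge\alpha$ for all $i\in[n]$ and $j\in[k]$. Let $b>0$ and let $N_1,\dots,N_k$ be i.i.d. Laplace random variables with mean $0$ and scale $b$ (density $\frac{1}{2b}e^{-|t|/b}$), independent of $X$. Define the output $Y^k=(Y_1,\dots,Y_k)$ by $$Y_j=\sum_{i=1}^n h_j(D_i)+N_j,\qquad j\in[k].$$ Then for every $i\in[n]$ and every $y^k\in\mathbb{R}^k$, $$\ell(D_i\to y^k)\le \frac{2}{b}-\log\Big(1-\alpha+\alpha\exp\big(\tfrac{2}{b}\big)\Big),$$ where $\ell(D_i\to y^k)=\log\sup_{d\in\mathcal{D}}\frac{M_{Y\mid D_i}(y^k\mid d)}{M_Y(y^k)}$, with $M_{Y\mid D_i}(\cdot\mid d)$ the conditional density of $Y^k$ given $D_i=d$ and $M_Y$ the marginal density of $Y^k$.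
   Context: $\log$ denotes the natural logarithm and $[n]=\{1,\dots,n\}$. The quantity $\ell(D_i\to y^k)$ is the pointwise maximal leakage from the $i$-th record $D_i$ to the outcome $y^k$ of the mechanism; the densities involved are with respect to Lebesgue measure on $\mathbb{R}^k$, with the randomness of the other records $D_{i'}$, $i'\ne i$, and of the noise integrated out. *)

theory Defs
  imports "HOL-Probability.Probability"
begin

definition laplace_density :: "real \<Rightarrow> real \<Rightarrow> real" where
  "laplace_density b t = exp (- \<bar>t\<bar> / b) / (2 * b)"

text \<open>Conditional density of the output Y^k = (Y_1,...,Y_k) at y given D_i = d:
  the other records (independent, D_i' distributed as M i') and the i.i.d. Laplace
  noise are integrated out.\<close>
definition cond_density ::
  "nat \<Rightarrow> nat \<Rightarrow> (nat \<Rightarrow> 'd measure) \<Rightarrow> (nat \<Rightarrow> 'd \<Rightarrow> real) \<Rightarrow> real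
    \<Rightarrow> nat \<Rightarrow> (nat \<Rightarrow> real) \<Rightarrow> 'd \<Rightarrow> real" where
  "cond_density n k M h b i y d =
     (\<integral>x. (\<Prod>j\<in>{1..k}. laplace_density b
              (y j - (h j d + (\<Sum>i'\<in>{1..n} - {i}. h j (x i')))))
        \<partial>(PiM ({1..n} - {i}) M))"

definition marginal_density ::
  "nat \<Rightarrow> nat \<Rightarrow> (nat \<Rightarrow> 'd measure) \<Rightarrow> (nat \<Rightarrow> 'd \<Rightarrow> real) \<Rightarrow> real
    \<Rightarrow> (nat \<Rightarrow> real) \<Rightarrow> real" where
  "marginal_density n k M h b y =
     (\<integral>x. (\<Prod>j\<in>{1..k}. laplace_density b (y j - (\<Sum>i'\<in>{1..n}. h j (x i'))))
        \<partial>(PiM {1..n} M))"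

definition pml_leakage ::
  "nat \<Rightarrow> nat \<Rightarrow> (nat \<Rightarrow> 'd measure) \<Rightarrow> (nat \<Rightarrow> 'd \<Rightarrow> real) \<Rightarrow> real
    \<Rightarrow> 'd set \<Rightarrow> nat \<Rightarrow> (nat \<Rightarrow> real) \<Rightarrow> real" where
  "pml_leakage n k M h b D i y =
     ln (SUP d\<in>D. cond_density n k M h b i y d / marginal_density n k M h b y)"

end

theory Submission
  imports Defs
begin

text \<open>Integrating out the i-th record writes the marginal density at y as the mean, under the law
  of D_i, of the likelihood of y given D_i = z and the other records. Fix d. Replacing d by
  any z moves the vector of class counts by at most 2 in l1-norm, so the Laplace likelihood
  drops by at most the factor exp (-2/b); if z lies in the class of d, the counts and hence the
  likelihood do not change at all. As that class has probability at least \<alpha>, the marginal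
  density is at least c = exp (-2/b) + (1 - exp (-2/b)) \<alpha> times the conditional density at d,
  and ln (1/c) is the claimed bound.\<close>

lemma laplace_density_pos: "b > 0 \<Longrightarrow> laplace_density b t > 0"
  unfolding laplace_density_def by simp

lemma laplace_density_le: "b > 0 \<Longrightarrow> laplace_density b t \<le> 1 / (2 * b)"
  unfolding laplace_density_def by (simp add: divide_right_mono)

lemma borel_measurable_laplace_density [measurable]:
  "laplace_density b \<in> borel_measurable borel"
  unfolding laplace_density_def by measurable

lemma laplace_density_diff_ge:
  assumes "b > 0"
  shows "laplace_density b t * exp (- \<bar>s\<bar> / b) \<le> laplace_density b (t - s)"
proof -
  have "- \<bar>t\<bar> / b + - \<bar>s\<bar> / b \<le> - \<bar>t - s\<bar> / b"
    using assms by (auto simp: divide_simps)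
  then show ?thesis
    using assms unfolding laplace_density_def
    by (simp add: exp_add[symmetric] divide_right_mono)
qed

lemma prod_laplace_density_diff_ge:
  assumes "b > 0" "finite K" "(\<Sum>j\<in>K. \<bar>s j\<bar>) \<le> \<Delta>"
  shows "(\<Prod>j\<in>K. laplace_density b (t j)) * exp (- \<Delta> / b)
           \<le> (\<Prod>j\<in>K. laplace_density b (t j - s j))"
proof -
  have "exp (- \<Delta> / b) \<le> exp (\<Sum>j\<in>K. - \<bar>s j\<bar> / b)"
    using assms by (simp add: sum_negf flip: sum_divide_distrib) (simp add: divide_right_mono)
  then have "(\<Prod>j\<in>K. laplace_density b (t j)) * exp (- \<Delta> / b)
      \<le> (\<Prod>j\<in>K. laplace_density b (t j)) * exp (\<Sum>j\<in>K. - \<bar>s j\<bar> / b)"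
    using laplace_density_pos[OF assms(1)] by (intro mult_left_mono prod_nonneg) (auto intro: less_imp_le)
  also have "\<dots> = (\<Prod>j\<in>K. laplace_density b (t j) * exp (- \<bar>s j\<bar> / b))"
    using assms(2) by (simp add: prod.distrib exp_sum)
  also have "\<dots> \<le> (\<Prod>j\<in>K. laplace_density b (t j - s j))"
    using laplace_density_pos[OF assms(1)] laplace_density_diff_ge[OF assms(1)]
    by (intro prod_mono) (auto intro: less_imp_le)
  finally show ?thesis .
qed

lemma prod_laplace_density_bounds:
  assumes "b > 0"
  shows "0 < (\<Prod>j\<in>K. laplace_density b (t j))"
    and "(\<Prod>j\<in>K. laplace_density b (t j)) \<le> (1 / (2 * b)) ^ card K"
proof -
  show "0 < (\<Prod>j\<in>K. laplace_density b (t j))"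
    using laplace_density_pos[OF assms] by (simp add: prod_pos)
  have "(\<Prod>j\<in>K. laplace_density b (t j)) \<le> (\<Prod>j\<in>K. 1 / (2 * b))"
    using laplace_density_pos[OF assms] laplace_density_le[OF assms]
    by (intro prod_mono) (auto intro: less_imp_le)
  then show "(\<Prod>j\<in>K. laplace_density b (t j)) \<le> (1 / (2 * b)) ^ card K"
    by simp
qed

lemma sum_eq_1_nonneg_others_eq_0:
  fixes w :: "'a \<Rightarrow> real"
  assumes "finite K" "\<And>j. j \<in> K \<Longrightarrow> 0 \<le> w j" "sum w K = 1"
    and "j\<^sub>0 \<in> K" "w j\<^sub>0 = 1" "j \<in> K" "j \<noteq> j\<^sub>0"
  shows "w j = 0"
proof -
  have "sum w (K - {j\<^sub>0}) = 0"
    using assms by (simp add: sum.remove)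
  then show ?thesis
    using assms sum_nonneg_eq_0_iff[of "K - {j\<^sub>0}" w] by blast
qed

lemma nn_integral_PiM_insert:
  assumes "finite I" "i \<notin> I" and sf: "\<And>j. j \<in> insert i I \<Longrightarrow> sigma_finite_measure (M j)"
    and f: "f \<in> borel_measurable (PiM (insert i I) M)"
  shows "(\<integral>\<^sup>+x. f x \<partial>PiM (insert i I) M) = (\<integral>\<^sup>+x. (\<integral>\<^sup>+z. f (x(i := z)) \<partial>M i) \<partial>PiM I M)"
proof -
  define M' where "M' j = (if j \<in> insert i I then M j else count_space {undefined})" for j
  interpret product_sigma_finite M'
    unfolding product_sigma_finite_def M'_def
    using sf by (simp add: sigma_finite_measure_count_space_finite)
  have "PiM J M' = PiM J M" if "J \<subseteq> insert i I" for J
    using that by (intro PiM_cong) (auto simp: M'_def)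
  moreover have "M' i = M i"
    by (simp add: M'_def)
  ultimately show ?thesis
    using product_nn_integral_insert[OF assms(1,2), of f] f
    by (metis subset_insertI subset_refl)
qed

lemma (in prob_space) nn_integral_ge_event_bound:
  assumes "A \<in> events" "\<alpha> \<le> prob A" "0 \<le> a" "0 \<le> e" "e \<le> 1"
    and everywhere: "\<And>z. z \<in> space M \<Longrightarrow> e * a \<le> g z"
    and on_event: "\<And>z. z \<in> A \<Longrightarrow> a \<le> g z"
  shows "ennreal ((e + (1 - e) * \<alpha>) * a) \<le> (\<integral>\<^sup>+z. ennreal (g z) \<partial>M)"
proof -
  have "(1 - e) * a * \<alpha> \<le> (1 - e) * a * prob A"
    using assms by (intro mult_left_mono) auto
  then have "ennreal ((e + (1 - e) * \<alpha>) * a) \<le> ennreal (e * a + (1 - e) * a * prob A)"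
    by (intro ennreal_leI) (simp add: algebra_simps)
  also have "\<dots> = (\<integral>\<^sup>+z. ennreal (e * a) + ennreal ((1 - e) * a) * indicator A z \<partial>M)"
    using assms by (simp add: nn_integral_add nn_integral_cmult_indicator emeasure_eq_measure
        ennreal_plus ennreal_mult prob_space)
  also have "\<dots> \<le> (\<integral>\<^sup>+z. ennreal (g z) \<partial>M)"
  proof (intro nn_integral_mono)
    fix z assume "z \<in> space M"
    moreover have "ennreal (e * a) + ennreal ((1 - e) * a) = ennreal a"
      using assms by (subst ennreal_plus[symmetric]) (auto simp: algebra_simps mult_left_le)
    ultimately show "ennreal (e * a) + ennreal ((1 - e) * a) * indicator A z \<le> ennreal (g z)"
      using everywhere[of z] on_event[of z] by (cases "z \<in> A") (auto intro!: ennreal_leI)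
  qed
  finally show ?thesis .
qed

lemma (in finite_measure) nn_integral_eq_integral_bounded:
  fixes f :: "'a \<Rightarrow> real"
  assumes "f \<in> borel_measurable M" "\<And>x. x \<in> space M \<Longrightarrow> 0 \<le> f x \<and> f x \<le> B"
  shows "(\<integral>\<^sup>+x. f x \<partial>M) = ennreal (\<integral>x. f x \<partial>M)"
  using assms by (intro nn_integral_eq_integral integrable_const_bound[where B = B]) auto

locale laplace_histogram =
  fixes n k :: nat and D :: "'d set" and h :: "nat \<Rightarrow> 'd \<Rightarrow> real"
    and M :: "nat \<Rightarrow> 'd measure" and b :: real
  assumes h_ind: "\<And>j d. j \<in> {1..k} \<Longrightarrow> d \<in> D \<Longrightarrow> h j d \<in> {0, 1}"
    and h_part: "\<And>d. d \<in> D \<Longrightarrow> (\<Sum>j\<in>{1..k}. h j d) = 1"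
    and prob: "\<And>i. i \<in> {1..n} \<Longrightarrow> prob_space (M i)"
    and space: "\<And>i. i \<in> {1..n} \<Longrightarrow> space (M i) = D"
    and h_meas: "\<And>i j. i \<in> {1..n} \<Longrightarrow> j \<in> {1..k} \<Longrightarrow> h j \<in> borel_measurable (M i)"
    and b_pos: "b > 0"
begin

definition likelihood :: "nat \<Rightarrow> (nat \<Rightarrow> real) \<Rightarrow> 'd \<Rightarrow> (nat \<Rightarrow> 'd) \<Rightarrow> real" where
  "likelihood i y d x =
     (\<Prod>j\<in>{1..k}. laplace_density b (y j - (h j d + (\<Sum>i'\<in>{1..n} - {i}. h j (x i')))))"

lemma likelihood_bounds:
  "0 < likelihood i y d x" "likelihood i y d x \<le> (1 / (2 * b)) ^ k"
  using prod_laplace_density_bounds[OF b_pos, where K = "{1..k}"] unfolding likelihood_def by auto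

lemma cond_density_nonneg: "0 \<le> cond_density n k M h b i y d"
  unfolding cond_density_def likelihood_def[symmetric] using likelihood_bounds
  by (intro Bochner_Integration.integral_nonneg) (auto intro: less_imp_le)

lemma marginal_density_nonneg: "0 \<le> marginal_density n k M h b y"
  unfolding marginal_density_def using laplace_density_pos[OF b_pos]
  by (intro Bochner_Integration.integral_nonneg prod_nonneg) (auto intro: less_imp_le)

lemma measurable_class_of_record:
  assumes "i \<in> J" "J \<subseteq> {1..n}" "j \<in> {1..k}"
  shows "(\<lambda>x. h j (x i)) \<in> borel_measurable (PiM J M)"
  using measurable_compose[OF measurable_component_singleton[OF assms(1), of M] h_meas[of i j]] assms
  by blast

lemma measurable_likelihood:
  assumes "i \<in> {1..n}"
  shows "likelihood i y d \<in> borel_measurable (PiM ({1..n} - {i}) M)"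
    and "(\<lambda>z. likelihood i y z x) \<in> borel_measurable (M i)"
  unfolding likelihood_def
  by (intro borel_measurable_prod measurable_compose[OF _ borel_measurable_laplace_density]
      borel_measurable_diff borel_measurable_add borel_measurable_const borel_measurable_sum
      measurable_class_of_record h_meas assms; auto)+

lemma cond_density_nn_integral:
  assumes "i \<in> {1..n}"
  shows "ennreal (cond_density n k M h b i y d)
           = (\<integral>\<^sup>+x. likelihood i y d x \<partial>PiM ({1..n} - {i}) M)"
proof -
  interpret rest: prob_space "PiM ({1..n} - {i}) M"
    using prob by (intro prob_space_PiM) auto
  show ?thesis
    unfolding cond_density_def likelihood_def[symmetric]
    using likelihood_bounds measurable_likelihood[OF assms]
    by (intro rest.nn_integral_eq_integral_bounded[symmetric]) (auto simp: less_imp_le)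
qed

lemma marginal_density_nn_integral:
  assumes "i \<in> {1..n}"
  shows "ennreal (marginal_density n k M h b y)
           = (\<integral>\<^sup>+x. (\<integral>\<^sup>+z. likelihood i y z x \<partial>M i) \<partial>PiM ({1..n} - {i}) M)"
proof -
  define F where
    "F x = (\<Prod>j\<in>{1..k}. laplace_density b (y j - (\<Sum>i'\<in>{1..n}. h j (x i'))))" for x
  interpret all: prob_space "PiM {1..n} M"
    using prob by (intro prob_space_PiM) auto
  have insert_i: "insert i ({1..n} - {i}) = {1..n}"
    using assms by auto
  have F_meas: "F \<in> borel_measurable (PiM {1..n} M)"
    unfolding F_def
    by (intro borel_measurable_prod measurable_compose[OF _ borel_measurable_laplace_density]
        borel_measurable_diff borel_measurable_const borel_measurable_sum
        measurable_class_of_record) auto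
  have F_bounds: "0 < F x" "F x \<le> (1 / (2 * b)) ^ k" for x
    using prod_laplace_density_bounds[OF b_pos, where K = "{1..k}"] unfolding F_def by auto
  have F_update: "F (x(i := z)) = likelihood i y z x" for x z
  proof -
    have "(\<Sum>i'\<in>{1..n}. h j ((x(i := z)) i')) = h j z + (\<Sum>i'\<in>{1..n} - {i}. h j (x i'))" for j
      using assms by (simp add: sum.remove)
    then show ?thesis
      unfolding F_def likelihood_def by simp
  qed
  have "ennreal (marginal_density n k M h b y) = (\<integral>\<^sup>+x. F x \<partial>PiM {1..n} M)"
    unfolding marginal_density_def F_def[symmetric]
    using F_bounds F_meas
    by (intro all.nn_integral_eq_integral_bounded[symmetric]) (auto simp: less_imp_le)
  also have "\<dots> = (\<integral>\<^sup>+x. (\<integral>\<^sup>+z. F (x(i := z)) \<partial>M i) \<partial>PiM ({1..n} - {i}) M)"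
    using nn_integral_PiM_insert[of "{1..n} - {i}" i M "\<lambda>x. ennreal (F x)", unfolded insert_i]
      F_meas prob
    by (simp add: prob_space_imp_sigma_finite)
  also have "\<dots> = (\<integral>\<^sup>+x. (\<integral>\<^sup>+z. likelihood i y z x \<partial>M i) \<partial>PiM ({1..n} - {i}) M)"
    using F_update by simp
  finally show ?thesis .
qed

lemma likelihood_same_class:
  assumes "d \<in> D" "z \<in> D" "j \<in> {1..k}" "h j d = 1" "h j z = 1"
  shows "likelihood i y z x = likelihood i y d x"
proof -
  have "h j' z = h j' d" if "j' \<in> {1..k}" for j'
  proof (cases "j' = j")
    case False
    have "0 \<le> h j'' z" "0 \<le> h j'' d" if "j'' \<in> {1..k}" for j''
      using h_ind[OF that assms(1)] h_ind[OF that assms(2)] by auto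
    then show ?thesis
      using sum_eq_1_nonneg_others_eq_0[of "{1..k}", OF _ _ h_part _ _ \<open>j' \<in> {1..k}\<close> False]
        assms by simp
  qed (use assms in simp)
  then show ?thesis
    unfolding likelihood_def by simp
qed

lemma likelihood_change_record:
  assumes "d \<in> D" "z \<in> D"
  shows "exp (- 2 / b) * likelihood i y d x \<le> likelihood i y z x"
proof -
  define t where "t j = y j - (h j d + (\<Sum>i'\<in>{1..n} - {i}. h j (x i')))" for j
  have "\<bar>h j z - h j d\<bar> \<le> h j z + h j d" if "j \<in> {1..k}" for j
    using h_ind[OF that assms(1)] h_ind[OF that assms(2)] by auto
  then have "(\<Sum>j\<in>{1..k}. \<bar>h j z - h j d\<bar>) \<le> (\<Sum>j\<in>{1..k}. h j z + h j d)"
    by (intro sum_mono)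
  also have "\<dots> = 2"
    using h_part assms by (simp add: sum.distrib)
  finally have "(\<Prod>j\<in>{1..k}. laplace_density b (t j)) * exp (- 2 / b)
      \<le> (\<Prod>j\<in>{1..k}. laplace_density b (t j - (h j z - h j d)))"
    by (intro prod_laplace_density_diff_ge b_pos) auto
  then show ?thesis
    unfolding likelihood_def t_def by (simp add: algebra_simps)
qed

lemma cond_density_mixture_le_marginal:
  assumes "i \<in> {1..n}" "d \<in> D" "0 \<le> \<alpha>"
    and class_prob: "\<And>j. j \<in> {1..k} \<Longrightarrow> \<alpha> \<le> measure (M i) {z \<in> D. h j z = 1}"
  shows "(exp (- 2 / b) + (1 - exp (- 2 / b)) * \<alpha>) * cond_density n k M h b i y d
           \<le> marginal_density n k M h b y"
proof -
  interpret Mi: prob_space "M i"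
    using prob assms by simp
  define c where "c = exp (- 2 / b) + (1 - exp (- 2 / b)) * \<alpha>"
  have "c \<ge> 0"
    unfolding c_def using b_pos assms by simp
  obtain j where j: "j \<in> {1..k}" "h j d = 1"
    using h_part[OF assms(2)] h_ind[OF _ assms(2)] by (metis insertE singletonD sum.neutral zero_neq_one)
  have class_event: "{z \<in> D. h j z = 1} \<in> Mi.events"
    using measurable_sets[OF h_meas[OF assms(1) j(1)], of "{1}"] space[OF assms(1)]
    by (simp add: vimage_def Int_def conj_commute)
  have "ennreal (c * likelihood i y d x) \<le> (\<integral>\<^sup>+z. likelihood i y z x \<partial>M i)" for x
    unfolding c_def mult.assoc
  proof (rule Mi.nn_integral_ge_event_bound[OF class_event class_prob[OF j(1)]])
    show "exp (- 2 / b) * likelihood i y d x \<le> likelihood i y z x" if "z \<in> space (M i)" for z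
      using likelihood_change_record[OF assms(2)] that space[OF assms(1)] by simp
    show "likelihood i y d x \<le> likelihood i y z x" if "z \<in> {z \<in> D. h j z = 1}" for z
      using likelihood_same_class[OF assms(2) _ j] that by simp
  qed (use likelihood_bounds[of i y d x] b_pos in \<open>auto simp: less_imp_le\<close>)
  then have "(\<integral>\<^sup>+x. c * likelihood i y d x \<partial>PiM ({1..n} - {i}) M)
      \<le> (\<integral>\<^sup>+x. (\<integral>\<^sup>+z. likelihood i y z x \<partial>M i) \<partial>PiM ({1..n} - {i}) M)"
    by (intro nn_integral_mono) simp
  moreover have "(\<integral>\<^sup>+x. c * likelihood i y d x \<partial>PiM ({1..n} - {i}) M)
      = ennreal (c * cond_density n k M h b i y d)"
    using \<open>c \<ge> 0\<close> measurable_likelihood(1)[OF assms(1)]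
    by (simp add: cond_density_nn_integral[OF assms(1)] ennreal_mult' nn_integral_cmult)
  ultimately have "ennreal (c * cond_density n k M h b i y d) \<le> ennreal (marginal_density n k M h b y)"
    by (simp add: marginal_density_nn_integral[OF assms(1)])
  then show ?thesis
    unfolding c_def using marginal_density_nonneg by (simp add: ennreal_le_iff)
qed

end

lemma ln_inverse_exp_mixture:
  fixes a \<alpha> :: real
  assumes "0 \<le> a" "0 \<le> \<alpha>"
  shows "ln (1 / (exp (- a) + (1 - exp (- a)) * \<alpha>)) = a - ln (1 - \<alpha> + \<alpha> * exp a)"
proof -
  have "0 \<le> \<alpha> * (exp a - 1)"
    using assms by simp
  then have pos: "0 < 1 - \<alpha> + \<alpha> * exp a"
    by (simp add: algebra_simps)
  have "exp (- a) + (1 - exp (- a)) * \<alpha> = exp (- a) * (1 - \<alpha> + \<alpha> * exp a)"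
    by (simp add: algebra_simps exp_minus_inverse mult.left_commute[of "exp (- a)"])
  then show ?thesis
    using pos by (simp add: ln_div ln_mult)
qed

lemma exp_mixture_bounds:
  fixes a \<alpha> :: real
  assumes "0 < a" "0 \<le> \<alpha>" "\<alpha> \<le> 1"
  shows "0 < exp (- a) + (1 - exp (- a)) * \<alpha>" and "exp (- a) + (1 - exp (- a)) * \<alpha> \<le> 1"
proof -
  have "exp (- a) < 1"
    using assms by simp
  then show "0 < exp (- a) + (1 - exp (- a)) * \<alpha>"
    using assms by (intro add_pos_nonneg) auto
  have "(1 - exp (- a)) * \<alpha> \<le> 1 - exp (- a)"
    using assms \<open>exp (- a) < 1\<close> by (intro mult_left_le) auto
  then show "exp (- a) + (1 - exp (- a)) * \<alpha> \<le> 1"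
    by linarith
qed

lemma ln_SUP_divide_le:
  fixes p :: "'a \<Rightarrow> real"
  assumes "A \<noteq> {}" "0 < c" "c \<le> 1"
    and nonneg: "\<And>x. x \<in> A \<Longrightarrow> 0 \<le> p x" and bound: "\<And>x. x \<in> A \<Longrightarrow> c * p x \<le> q"
  shows "ln (SUP x\<in>A. p x / q) \<le> ln (1 / c)"
proof -
  have ratio: "0 \<le> p x / q \<and> p x / q \<le> 1 / c" if "x \<in> A" for x
  proof (cases "q = 0")
    case False
    have "0 \<le> c * p x"
      using nonneg[OF that] \<open>0 < c\<close> by simp
    then have "0 < q"
      using False bound[OF that] by linarith
    then show ?thesis
      using nonneg[OF that] bound[OF that] \<open>0 < c\<close> by (simp add: field_simps)
  qed (use \<open>0 < c\<close> in simp)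
  obtain x\<^sub>0 where "x\<^sub>0 \<in> A"
    using assms(1) by blast
  moreover have "bdd_above ((\<lambda>x. p x / q) ` A)"
    using ratio by (intro bdd_aboveI2) auto
  ultimately have "0 \<le> (SUP x\<in>A. p x / q)"
    using ratio cSUP_upper by (meson order.trans)
  moreover have "(SUP x\<in>A. p x / q) \<le> 1 / c"
    using assms(1) ratio by (intro cSUP_least) auto
  \<comment> \<open>A vanishing supremum is harmless: ln 0 = 0 \<le> ln (1 / c) as c \<le> 1.\<close>
  ultimately show ?thesis
    using \<open>0 < c\<close> \<open>c \<le> 1\<close> by (cases "(SUP x\<in>A. p x / q) = 0") auto
qed

theorem theorem1:
  fixes n k :: nat and D :: "'d set" and h :: "nat \<Rightarrow> 'd \<Rightarrow> real"
    and M :: "nat \<Rightarrow> 'd measure" and \<alpha> b :: real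
  assumes "n \<ge> 1" and "k \<ge> 1"
    and h_ind: "\<And>j d. j \<in> {1..k} \<Longrightarrow> d \<in> D \<Longrightarrow> h j d \<in> {0, 1}"
    and h_part: "\<And>d. d \<in> D \<Longrightarrow> (\<Sum>j\<in>{1..k}. h j d) = 1"
    and prob: "\<And>i. i \<in> {1..n} \<Longrightarrow> prob_space (M i)"
    and space: "\<And>i. i \<in> {1..n} \<Longrightarrow> space (M i) = D"
    and h_meas: "\<And>i j. i \<in> {1..n} \<Longrightarrow> j \<in> {1..k} \<Longrightarrow> h j \<in> borel_measurable (M i)"
    and alpha: "0 < \<alpha>" "\<alpha> \<le> 1 / real k"
    and class_prob: "\<And>i j. i \<in> {1..n} \<Longrightarrow> j \<in> {1..k} \<Longrightarrow>
                        measure (M i) {d \<in> D. h j d = 1} \<ge> \<alpha>"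
    and "b > 0"
    and "i \<in> {1..n}"
  shows "pml_leakage n k M h b D i y \<le> 2 / b - ln (1 - \<alpha> + \<alpha> * exp (2 / b))"
proof -
  interpret laplace_histogram n k D h M b
    by (rule laplace_histogram.intro) (fact h_ind h_part prob space h_meas \<open>b > 0\<close>)+
  define c where "c = exp (- (2 / b)) + (1 - exp (- (2 / b))) * \<alpha>"
  have "1 / real k \<le> 1"
    using \<open>k \<ge> 1\<close> by simp
  then have c: "0 < c" "c \<le> 1"
    unfolding c_def using exp_mixture_bounds[of "2 / b" \<alpha>] alpha \<open>b > 0\<close> by auto
  have "c * cond_density n k M h b i y d \<le> marginal_density n k M h b y" if "d \<in> D" for d
    using cond_density_mixture_le_marginal[OF \<open>i \<in> {1..n}\<close> that, of \<alpha>]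
      class_prob[OF \<open>i \<in> {1..n}\<close>] alpha
    unfolding c_def by simp
  moreover have "D \<noteq> {}"
    using prob_space.not_empty[OF prob] space \<open>i \<in> {1..n}\<close> by blast
  ultimately have "pml_leakage n k M h b D i y \<le> ln (1 / c)"
    unfolding pml_leakage_def by (intro ln_SUP_divide_le cond_density_nonneg c)
  also have "\<dots> = 2 / b - ln (1 - \<alpha> + \<alpha> * exp (2 / b))"
    unfolding c_def using ln_inverse_exp_mixture[of "2 / b" \<alpha>] alpha \<open>b > 0\<close> by simp
  finally show ?thesis .
qed

end
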